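(* Let $n\ge2$ and suppose $\Omega\subset\mathbb R^n$ is a globally $n$-regular domain. Let $\alpha\in(-n,0)$ and $\phi:[0,\infty)\to[0,\infty)$ be a Young function satisfying $\underline\Lambda_\phi(\alpha)<\infty$ and $\overline\Lambda_\phi(\alpha)<\infty$. Then there exist constants $C_1,C_2>0$ depending on $n,\alpha,\phi,\Omega$ such that $$\int_{\Omega\setminus E}\frac{\phi(t|x-y|^{-\alpha})}{|x-y|^{2n}}\,dy\ge C_1\frac1{|E|}\frac{|\Omega\setminus E|}{|\Omega|}\phi\big(C_2t|E|^{|\alpha|/n}\big)$$ whenever $t>0$, $x\in\Omega$ and $E\subset\Omega$ is measurable with $0<|E|<\infty$. Here, if $|\Omega|=\infty$, the ratio $\frac{|\Omega\setminus E|}{|\Omega|}$ is interpreted as $1$.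
   Context: A Young function is $\phi\in C([0,\infty))$, convex, with $\phi(0)=0$, $\phi(t)>0$ for $t>0$, $\lim_{t\to\infty}\phi(t)=\infty$. $\underline\Lambda_\phi(\alpha):=\sup_{x>0}\int_0^1\frac{\phi(t^{1-\alpha}x)}{\phi(x)}\frac{dt}{t^{n+1}}$, $\overline\Lambda_\phi(\alpha):=\sup_{x>0}\int_1^\infty\frac{\phi(t^{-\alpha}x)}{\phi(x)}\frac{dt}{t^{n+1}}$. A domain $\Omega$ is globally $n$-regular if there is $\theta\in(0,1)$ with $|B(x,r)\cap\Omega|\ge\theta r^n$ for all $x\in\Omega$ and all $0<r<2\operatorname{diam}\Omega$. *)

theory Defs
  imports "HOL-Analysis.Analysis"
begin

definition young_function :: "(real \<Rightarrow> real) \<Rightarrow> bool" where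
  "young_function \<phi> \<longleftrightarrow>
     continuous_on {0..} \<phi> \<and> convex_on {0..} \<phi> \<and> \<phi> 0 = 0 \<and>
     (\<forall>t>0. \<phi> t > 0) \<and> filterlim \<phi> at_top at_top"

definition Lambda_lower :: "nat \<Rightarrow> (real \<Rightarrow> real) \<Rightarrow> real \<Rightarrow> ennreal" where
  "Lambda_lower n \<phi> \<alpha> =
     (SUP x\<in>{0<..}. \<integral>\<^sup>+ t\<in>{0<..<1}.
        ennreal (\<phi> (t powr (1 - \<alpha>) * x) / \<phi> x / t ^ (n + 1)) \<partial>lborel)"

definition Lambda_upper :: "nat \<Rightarrow> (real \<Rightarrow> real) \<Rightarrow> real \<Rightarrow> ennreal" where
  "Lambda_upper n \<phi> \<alpha> =
     (SUP x\<in>{0<..}. \<integral>\<^sup>+ t\<in>{1<..}.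
        ennreal (\<phi> (t powr (- \<alpha>) * x) / \<phi> x / t ^ (n + 1)) \<partial>lborel)"

text \<open>Globally n-regular: for unbounded \<Omega> (diam = \<infinity>) the radius bound is vacuous.\<close>
definition globally_regular :: "'a::euclidean_space set \<Rightarrow> bool" where
  "globally_regular \<Omega> \<longleftrightarrow>
     (\<exists>\<theta>. 0 < \<theta> \<and> \<theta> < 1 \<and>
        (\<forall>x\<in>\<Omega>. \<forall>r. 0 < r \<and> (bounded \<Omega> \<longrightarrow> r < 2 * diameter \<Omega>) \<longrightarrow>
            emeasure lebesgue (ball x r \<inter> \<Omega>) \<ge> ennreal (\<theta> * r ^ DIM('a))))"

definition is_domain :: "'a::topological_space set \<Rightarrow> bool" where
  "is_domain \<Omega> \<longleftrightarrow> open \<Omega> \<and> connected \<Omega> \<and> \<Omega> \<noteq> {}"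

end

theory Submission
  imports Defs
begin

text \<open>
  Testing the upper index on the interval \<open>(T, 2T)\<close> gives the growth bound
  \<open>\<phi>(T^|\<alpha>| z) \<le> K T^n \<phi>(z)\<close> for \<open>T \<ge> 1\<close>, so on a ball \<open>B(x,R)\<close> the kernel
  \<open>\<phi>(t|x-y|^|\<alpha>|) / |x-y|^2n\<close> is at least \<open>1/K\<close> times its value at \<open>|x-y| = R\<close>.
  Choose \<open>R\<close> with \<open>\<theta>R^n = 2|E|\<close>. By regularity, either the ball has mass \<open>2|E|\<close> in \<open>\<Omega>\<close>,
  so at least \<open>|E|\<close> of it lies in \<open>\<Omega> - E\<close>, or the ball contains \<open>\<Omega>\<close>. Either way
  \<open>|(\<Omega> - E) \<inter> B(x,R)| \<ge> |E| |\<Omega> - E| / |\<Omega>|\<close>, and integrating the kernel bound over this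
  set gives the claim with \<open>C\<^sub>1 = \<theta>\<^sup>2/(4K)\<close> and \<open>C\<^sub>2 = 1\<close>.
\<close>

lemma young_function_mono:
  assumes "young_function \<phi>" "0 \<le> u" "u \<le> v"
  shows "\<phi> u \<le> \<phi> v"
proof (cases "v = 0")
  case True
  then show ?thesis using assms by simp
next
  case False
  then have v: "v > 0" using assms by simp
  have cv: "convex_on {0..} \<phi>" and "\<phi> 0 = 0" and pv: "\<phi> v > 0"
    using assms v unfolding young_function_def by auto
  have "\<phi> u = \<phi> ((1 - u/v) *\<^sub>R 0 + (u/v) *\<^sub>R v)" using v by simp
  also have "\<dots> \<le> (1 - u/v) * \<phi> 0 + (u/v) * \<phi> v"
    by (rule convex_onD[OF cv]) (use assms v in auto)
  also have "\<dots> = (u/v) * \<phi> v" using \<open>\<phi> 0 = 0\<close> by simp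
  also have "\<dots> \<le> \<phi> v" using pv assms v by (intro mult_left_le_one_le) auto
  finally show ?thesis .
qed

lemma young_function_nonneg:
  assumes "young_function \<phi>" "0 \<le> u"
  shows "\<phi> u \<ge> 0"
  using young_function_mono[OF assms(1) order_refl assms(2)] assms(1)
  unfolding young_function_def by simp

lemma Lambda_upper_ge:
  assumes yf: "young_function \<phi>" and "\<alpha> \<le> 0" and T: "T \<ge> 1" and z: "z > 0"
  shows "ennreal (T * (\<phi> (T powr (-\<alpha>) * z) / \<phi> z / (2*T) ^ (n+1))) \<le> Lambda_upper n \<phi> \<alpha>"
proof -
  define c where "c = \<phi> (T powr (-\<alpha>) * z) / \<phi> z / (2*T) ^ (n+1)"
  have pz: "\<phi> z > 0" using yf z unfolding young_function_def by auto
  have c_le: "c \<le> \<phi> (s powr (-\<alpha>) * z) / \<phi> z / s ^ (n+1)" if s: "T < s" "s < 2*T" for s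
  proof -
    have "\<phi> (T powr (-\<alpha>) * z) \<le> \<phi> (s powr (-\<alpha>) * z)"
      using s T z \<open>\<alpha> \<le> 0\<close> by (intro young_function_mono[OF yf] mult_right_mono powr_mono2) auto
    moreover have "s ^ (n+1) \<le> (2*T) ^ (n+1)" using s T by (intro power_mono) auto
    ultimately show ?thesis
      unfolding c_def using pz s T z young_function_nonneg[OF yf, of "T powr (-\<alpha>) * z"]
      by (intro divide_mono divide_right_mono) auto
  qed
  have "ennreal (T * c) = (\<integral>\<^sup>+ s. ennreal c * indicator {T<..<2*T} s \<partial>lborel)"
    using T by (simp add: nn_integral_cmult_indicator ennreal_mult' mult.commute)
  also have "\<dots> \<le> (\<integral>\<^sup>+ s\<in>{1<..}. ennreal (\<phi> (s powr (-\<alpha>) * z) / \<phi> z / s ^ (n+1)) \<partial>lborel)"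
    using T c_le by (intro nn_integral_mono) (auto simp: indicator_def intro: ennreal_leI)
  also have "\<dots> \<le> Lambda_upper n \<phi> \<alpha>"
    unfolding Lambda_upper_def using z by (intro SUP_upper) auto
  finally show ?thesis unfolding c_def .
qed

lemma Lambda_upper_growth:
  assumes yf: "young_function \<phi>" and "\<alpha> \<le> 0" and "Lambda_upper n \<phi> \<alpha> < \<infinity>"
  obtains K where "K > 0"
    and "\<And>T z. T \<ge> 1 \<Longrightarrow> z > 0 \<Longrightarrow> \<phi> (T powr (-\<alpha>) * z) \<le> K * T ^ n * \<phi> z"
proof
  define L where "L = enn2real (Lambda_upper n \<phi> \<alpha>)"
  have L: "Lambda_upper n \<phi> \<alpha> = ennreal L" "L \<ge> 0"
    using assms(3) unfolding L_def by (auto simp: ennreal_enn2real_if less_top)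
  show "2^(n+1) * L + 1 > 0" using L by (simp add: add_nonneg_pos)
  fix T z :: real
  assume T: "T \<ge> 1" and z: "z > 0"
  define c where "c = \<phi> (T powr (-\<alpha>) * z) / \<phi> z / (2*T) ^ (n+1)"
  have pz: "\<phi> z > 0" using yf z unfolding young_function_def by auto
  have "c \<ge> 0"
    unfolding c_def using young_function_nonneg[OF yf, of "T powr (-\<alpha>) * z"] z pz T by simp
  have "T * c \<le> L"
    using Lambda_upper_ge[OF yf \<open>\<alpha> \<le> 0\<close> T z, of n] L T \<open>c \<ge> 0\<close>
    unfolding c_def[symmetric] by (simp add: ennreal_le_iff)
  have "\<phi> (T powr (-\<alpha>) * z) = (T * c) * (2^(n+1) * T^n * \<phi> z)"
    unfolding c_def using pz T by (simp add: power_mult_distrib)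
  also have "\<dots> \<le> L * (2^(n+1) * T^n * \<phi> z)"
    using pz T by (intro mult_right_mono \<open>T * c \<le> L\<close>) auto
  also have "\<dots> \<le> (2^(n+1) * L + 1) * T ^ n * \<phi> z"
    using pz T by (simp add: algebra_simps)
  finally show "\<phi> (T powr (-\<alpha>) * z) \<le> (2^(n+1) * L + 1) * T ^ n * \<phi> z" .
qed

lemma young_kernel_ge_at_radius:
  assumes yf: "young_function \<phi>" and K: "K > 0"
    and growth: "\<And>T z. T \<ge> 1 \<Longrightarrow> z > 0 \<Longrightarrow> \<phi> (T powr (-\<alpha>) * z) \<le> K * T ^ n * \<phi> z"
    and t: "t > 0" and s: "0 < s" "s \<le> R"
  shows "\<phi> (t * R powr (-\<alpha>)) / (K * R ^ (2*n)) \<le> \<phi> (t * s powr (-\<alpha>)) / s ^ (2*n)"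
proof -
  have "R > 0" using s by simp
  have "\<phi> (t * R powr (-\<alpha>)) = \<phi> ((R/s) powr (-\<alpha>) * (t * s powr (-\<alpha>)))"
    using s by (simp add: powr_divide mult.commute)
  also have "\<dots> \<le> K * (R/s) ^ n * \<phi> (t * s powr (-\<alpha>))"
    using s t by (intro growth) auto
  also have "\<dots> \<le> K * (R/s) ^ (2*n) * \<phi> (t * s powr (-\<alpha>))"
    using s K young_function_nonneg[OF yf, of "t * s powr (-\<alpha>)"] t
    by (intro mult_right_mono mult_left_mono power_increasing) auto
  finally show ?thesis
    using s K \<open>R > 0\<close> by (simp add: divide_le_eq power_divide mult_ac)
qed

definition complement_ratio :: "'a::euclidean_space set \<Rightarrow> 'a set \<Rightarrow> real" where
  "complement_ratio \<Omega> E =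
     (if emeasure lebesgue \<Omega> = \<infinity> then 1 else measure lebesgue (\<Omega> - E) / measure lebesgue \<Omega>)"

lemma complement_ratio_nonneg: "complement_ratio \<Omega> E \<ge> 0"
  unfolding complement_ratio_def by simp

lemma complement_ratio_le_1:
  assumes "\<Omega> \<in> sets lebesgue" "E \<in> sets lebesgue"
  shows "complement_ratio \<Omega> E \<le> 1"
proof (cases "emeasure lebesgue \<Omega> = \<infinity>")
  case False
  then have "\<Omega> \<in> fmeasurable lebesgue" using assms by (intro fmeasurableI) (auto simp: less_top)
  then have "measure lebesgue (\<Omega> - E) \<le> measure lebesgue \<Omega>"
    using assms by (intro measure_mono_fmeasurable) auto
  then show ?thesis unfolding complement_ratio_def using False
    by (cases "measure lebesgue \<Omega> = 0") (auto simp: divide_le_eq_1 less_le)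
qed (simp add: complement_ratio_def)

lemma globally_regular_ball_dichotomy:
  fixes \<Omega> :: "'a::euclidean_space set"
  assumes "globally_regular \<Omega>"
  obtains \<theta> where "0 < \<theta>" "\<theta> < 1"
    and "\<And>x r. x \<in> \<Omega> \<Longrightarrow> 0 < r \<Longrightarrow>
           \<Omega> \<subseteq> ball x r \<or> ennreal (\<theta> * r ^ DIM('a)) \<le> emeasure lebesgue (ball x r \<inter> \<Omega>)"
proof -
  obtain \<theta> where \<theta>: "0 < \<theta>" "\<theta> < 1" and reg: "\<And>x r. x \<in> \<Omega> \<Longrightarrow> 0 < r \<Longrightarrow>
      (bounded \<Omega> \<longrightarrow> r < 2 * diameter \<Omega>) \<Longrightarrow>
      ennreal (\<theta> * r ^ DIM('a)) \<le> emeasure lebesgue (ball x r \<inter> \<Omega>)"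
    using assms unfolding globally_regular_def by blast
  have "\<Omega> \<subseteq> ball x r" if "x \<in> \<Omega>" "0 < r" "bounded \<Omega>" "2 * diameter \<Omega> \<le> r" for x r
  proof
    fix y
    assume "y \<in> \<Omega>"
    then have "dist x y \<le> diameter \<Omega>" using that by (intro diameter_bounded_bound) auto
    then show "y \<in> ball x r" using that by simp
  qed
  with reg show ?thesis by (intro that[OF \<theta>]) (meson not_le)
qed

lemma measure_diff_inter_ball_ge:
  fixes \<Omega> E :: "'a::euclidean_space set"
  assumes \<Omega>: "\<Omega> \<in> sets lebesgue" and E: "E \<in> fmeasurable lebesgue" "E \<subseteq> \<Omega>"
    and ball: "\<Omega> \<subseteq> ball x R \<or> ennreal (2 * measure lebesgue E) \<le> emeasure lebesgue (ball x R \<inter> \<Omega>)"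
  shows "measure lebesgue E * complement_ratio \<Omega> E \<le> measure lebesgue ((\<Omega> - E) \<inter> ball x R)"
    (is "?m * ?ratio \<le> measure lebesgue ?S")
proof -
  have "?S \<in> fmeasurable lebesgue" using \<Omega> E by (intro bounded_set_imp_lmeasurable) auto
  from ball show ?thesis
  proof
    assume sub: "\<Omega> \<subseteq> ball x R"
    then have "\<Omega> \<in> fmeasurable lebesgue" using \<Omega> bounded_subset by (blast intro: bounded_set_imp_lmeasurable)
    then have fin: "emeasure lebesgue \<Omega> \<noteq> \<infinity>" and "?m \<le> measure lebesgue \<Omega>"
      using E by (auto simp: fmeasurable_def intro: measure_mono_fmeasurable)
    have "?m * ?ratio = (?m / measure lebesgue \<Omega>) * measure lebesgue (\<Omega> - E)"
      unfolding complement_ratio_def using fin by simp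
    also have "\<dots> \<le> measure lebesgue (\<Omega> - E)"
      using \<open>?m \<le> measure lebesgue \<Omega>\<close> by (intro mult_left_le_one_le) (auto simp: divide_le_eq_1 less_le)
    also have "(\<Omega> - E) = ?S" using sub by blast
    finally show ?thesis .
  next
    assume big: "ennreal (2 * ?m) \<le> emeasure lebesgue (ball x R \<inter> \<Omega>)"
    have B: "ball x R \<inter> \<Omega> \<in> fmeasurable lebesgue" using \<Omega> by (intro bounded_set_imp_lmeasurable) auto
    then have "2 * ?m \<le> measure lebesgue (ball x R \<inter> \<Omega>)"
      using big by (simp add: emeasure_eq_measure2 ennreal_le_iff)
    also have "\<dots> \<le> measure lebesgue (?S \<union> E)"
      using B \<open>?S \<in> fmeasurable lebesgue\<close> E by (intro measure_mono_fmeasurable) auto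
    also have "\<dots> \<le> measure lebesgue ?S + ?m"
      using \<open>?S \<in> fmeasurable lebesgue\<close> E by (intro measure_Un_le) auto
    finally have "?m \<le> measure lebesgue ?S" by simp
    moreover have "?m * ?ratio \<le> ?m"
      using complement_ratio_le_1[OF \<Omega>] E by (intro mult_left_le) auto
    ultimately show ?thesis by linarith
  qed
qed

lemma nn_integral_ge_const_times_measure:
  fixes S A :: "'a::euclidean_space set"
  assumes S: "S \<in> fmeasurable lebesgue" "S \<subseteq> A" and "c \<ge> 0"
    and le: "\<And>y. y \<in> S \<Longrightarrow> y \<noteq> x \<Longrightarrow> c \<le> f y"
  shows "ennreal (c * measure lebesgue S) \<le> (\<integral>\<^sup>+ y\<in>A. ennreal (f y) \<partial>lebesgue)"
proof -
  have "ennreal (c * measure lebesgue S) = ennreal c * emeasure lebesgue (S - {x})"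
    using S \<open>c \<ge> 0\<close> by (simp add: emeasure_Diff_null_set emeasure_eq_measure2 ennreal_mult)
  also have "\<dots> = (\<integral>\<^sup>+ y. ennreal c * indicator (S - {x}) y \<partial>lebesgue)"
    using S by (intro nn_integral_cmult_indicator[symmetric]) auto
  also have "\<dots> \<le> (\<integral>\<^sup>+ y\<in>A. ennreal (f y) \<partial>lebesgue)"
    using S le by (intro nn_integral_mono) (auto simp: indicator_def intro: ennreal_leI)
  finally show ?thesis .
qed

lemma young_kernel_integral_ge_ball:
  fixes A :: "'a::euclidean_space set"
  defines "n \<equiv> DIM('a)"
  assumes yf: "young_function \<phi>" and K: "K > 0"
    and growth: "\<And>T z. T \<ge> 1 \<Longrightarrow> z > 0 \<Longrightarrow> \<phi> (T powr (-\<alpha>) * z) \<le> K * T ^ n * \<phi> z"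
    and t: "t > 0" and A: "A \<in> sets lebesgue" and "R > 0"
  shows "ennreal (\<phi> (t * R powr (-\<alpha>)) / (K * R ^ (2 * n)) * measure lebesgue (A \<inter> ball x R))
         \<le> (\<integral>\<^sup>+ y\<in>A. ennreal (\<phi> (t * norm (x - y) powr (-\<alpha>)) / norm (x - y) ^ (2 * n)) \<partial>lebesgue)"
proof (rule nn_integral_ge_const_times_measure[where x = x])
  show "A \<inter> ball x R \<in> fmeasurable lebesgue"
    using A by (intro bounded_set_imp_lmeasurable) auto
  show "\<phi> (t * R powr (-\<alpha>)) / (K * R ^ (2 * n)) \<ge> 0"
    using young_function_nonneg[OF yf, of "t * R powr (-\<alpha>)"] t K \<open>R > 0\<close> by simp
  show "\<phi> (t * R powr (-\<alpha>)) / (K * R ^ (2 * n)) \<le> \<phi> (t * norm (x - y) powr (-\<alpha>)) / norm (x - y) ^ (2 * n)"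
    if "y \<in> A \<inter> ball x R" "y \<noteq> x" for y
    using that by (intro young_kernel_ge_at_radius[OF yf K growth t]) (auto simp: dist_norm)
qed auto

lemma young_kernel_integral_ge:
  fixes \<Omega> E :: "'a::euclidean_space set"
  defines "n \<equiv> DIM('a)"
  assumes yf: "young_function \<phi>" and "\<alpha> \<le> 0" and K: "K > 0"
    and growth: "\<And>T z. T \<ge> 1 \<Longrightarrow> z > 0 \<Longrightarrow> \<phi> (T powr (-\<alpha>) * z) \<le> K * T ^ n * \<phi> z"
    and \<theta>: "0 < \<theta>" "\<theta> \<le> 2"
    and reg: "\<And>r. 0 < r \<Longrightarrow> \<Omega> \<subseteq> ball x r \<or> ennreal (\<theta> * r ^ n) \<le> emeasure lebesgue (ball x r \<inter> \<Omega>)"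
    and \<Omega>: "\<Omega> \<in> sets lebesgue" and t: "t > 0"
    and E: "E \<in> sets lebesgue" "E \<subseteq> \<Omega>" "0 < emeasure lebesgue E" "emeasure lebesgue E < \<infinity>"
  shows "ennreal (\<theta>\<^sup>2 / (4 * K) * (1 / measure lebesgue E) * complement_ratio \<Omega> E *
             \<phi> (t * measure lebesgue E powr (\<bar>\<alpha>\<bar> / n)))
         \<le> (\<integral>\<^sup>+ y\<in>\<Omega> - E. ennreal (\<phi> (t * norm (x - y) powr (-\<alpha>)) / norm (x - y) ^ (2 * n)) \<partial>lebesgue)"
proof -
  define m where "m = measure lebesgue E"
  have Ef: "E \<in> fmeasurable lebesgue" using E by (intro fmeasurableI) auto
  then have "m > 0" unfolding m_def using E by (simp add: emeasure_eq_measure2)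
  define R where "R = (2 * m / \<theta>) powr (1 / n)"
  have "R > 0" unfolding R_def using \<open>m > 0\<close> \<theta> by simp
  have Rn: "R ^ n = 2 * m / \<theta>"
    unfolding R_def n_def using \<open>m > 0\<close> \<theta> by (simp add: powr_realpow[symmetric] powr_powr)
  have mass: "m * complement_ratio \<Omega> E \<le> measure lebesgue ((\<Omega> - E) \<inter> ball x R)"
    unfolding m_def using reg[OF \<open>R > 0\<close>] \<theta> Rn
    by (intro measure_diff_inter_ball_ge[OF \<Omega> Ef E(2)]) (simp add: m_def)
  define c where "c = \<phi> (t * R powr (-\<alpha>)) / (K * R ^ (2 * n))"
  have "c \<ge> 0"
    unfolding c_def using young_function_nonneg[OF yf, of "t * R powr (-\<alpha>)"] t K \<open>R > 0\<close> by simp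
  have \<phi>_le: "\<phi> (t * m powr (\<bar>\<alpha>\<bar> / n)) \<le> \<phi> (t * R powr (-\<alpha>))"
  proof -
    have "m powr (-\<alpha> / n) \<le> (2 * m / \<theta>) powr (-\<alpha> / n)"
      using \<open>m > 0\<close> \<theta> \<open>\<alpha> \<le> 0\<close> by (intro powr_mono2) (auto simp: field_simps divide_nonpos_nonneg)
    then show ?thesis
      unfolding R_def using \<open>m > 0\<close> \<theta> t \<open>\<alpha> \<le> 0\<close>
      by (intro young_function_mono[OF yf]) (auto simp: powr_powr)
  qed
  have "R ^ (2 * n) = (2 * m / \<theta>)\<^sup>2"
    unfolding Rn[symmetric] by (simp add: power_mult[symmetric] mult.commute)
  then have c_m: "c * m = \<theta>\<^sup>2 / (4 * K) * (1 / m) * \<phi> (t * R powr (-\<alpha>))"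
    unfolding c_def using \<open>m > 0\<close> \<open>R > 0\<close> \<theta> K by (simp add: field_simps power2_eq_square)
  have "\<theta>\<^sup>2 / (4 * K) * (1 / m) * complement_ratio \<Omega> E * \<phi> (t * m powr (\<bar>\<alpha>\<bar> / n))
      \<le> \<theta>\<^sup>2 / (4 * K) * (1 / m) * complement_ratio \<Omega> E * \<phi> (t * R powr (-\<alpha>))"
    using \<phi>_le \<open>m > 0\<close> K complement_ratio_nonneg[of \<Omega> E] by (intro mult_left_mono) auto
  also have "\<dots> = c * (m * complement_ratio \<Omega> E)"
    unfolding mult.assoc[symmetric] c_m by (simp only: ac_simps)
  also have "\<dots> \<le> c * measure lebesgue ((\<Omega> - E) \<inter> ball x R)"
    using mass \<open>c \<ge> 0\<close> by (rule mult_left_mono)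
  finally have "ennreal (\<theta>\<^sup>2 / (4 * K) * (1 / m) * complement_ratio \<Omega> E * \<phi> (t * m powr (\<bar>\<alpha>\<bar> / n)))
      \<le> ennreal (c * measure lebesgue ((\<Omega> - E) \<inter> ball x R))"
    by (rule ennreal_leI)
  also have "\<dots> \<le> (\<integral>\<^sup>+ y\<in>\<Omega> - E. ennreal (\<phi> (t * norm (x - y) powr (-\<alpha>)) / norm (x - y) ^ (2 * n)) \<partial>lebesgue)"
    unfolding c_def n_def using \<Omega> E \<open>R > 0\<close>
    by (intro young_kernel_integral_ge_ball[OF yf K growth[unfolded n_def] t]) auto
  finally show ?thesis unfolding m_def .
qed

theorem lemma1p5:
  fixes \<Omega> :: "'a::euclidean_space set" and \<alpha> :: real and \<phi> :: "real \<Rightarrow> real"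
  assumes "DIM('a) \<ge> 2"
    and "is_domain \<Omega>" and "globally_regular \<Omega>"
    and "- real DIM('a) < \<alpha>" and "\<alpha> < 0"
    and "young_function \<phi>"
    and "Lambda_lower DIM('a) \<phi> \<alpha> < \<infinity>" and "Lambda_upper DIM('a) \<phi> \<alpha> < \<infinity>"
  shows "\<exists>C1>0. \<exists>C2>0. \<forall>t>0. \<forall>x\<in>\<Omega>. \<forall>E.
           E \<in> sets lebesgue \<and> E \<subseteq> \<Omega> \<and> 0 < emeasure lebesgue E \<and> emeasure lebesgue E < \<infinity> \<longrightarrow>
           (\<integral>\<^sup>+ y\<in>\<Omega> - E. ennreal (\<phi> (t * norm (x - y) powr (- \<alpha>)) / norm (x - y) ^ (2 * DIM('a))) \<partial>lebesgue)
           \<ge> ennreal (C1 * (1 / measure lebesgue E) *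
                (if emeasure lebesgue \<Omega> = \<infinity> then 1
                 else measure lebesgue (\<Omega> - E) / measure lebesgue \<Omega>) *
                \<phi> (C2 * t * measure lebesgue E powr (\<bar>\<alpha>\<bar> / real DIM('a))))"
proof -
  obtain \<theta> where \<theta>: "0 < \<theta>" "\<theta> < 1" and reg: "\<And>x r. x \<in> \<Omega> \<Longrightarrow> 0 < r \<Longrightarrow>
      \<Omega> \<subseteq> ball x r \<or> ennreal (\<theta> * r ^ DIM('a)) \<le> emeasure lebesgue (ball x r \<inter> \<Omega>)"
    using globally_regular_ball_dichotomy[OF \<open>globally_regular \<Omega>\<close>] by blast
  obtain K where K: "K > 0" and growth: "\<And>T z. T \<ge> 1 \<Longrightarrow> z > 0 \<Longrightarrow>
      \<phi> (T powr (-\<alpha>) * z) \<le> K * T ^ DIM('a) * \<phi> z"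
    using Lambda_upper_growth[OF \<open>young_function \<phi>\<close> _ \<open>Lambda_upper DIM('a) \<phi> \<alpha> < \<infinity>\<close>] \<open>\<alpha> < 0\<close>
    by auto
  have \<Omega>: "\<Omega> \<in> sets lebesgue" using \<open>is_domain \<Omega>\<close> unfolding is_domain_def by simp
  have "ennreal (\<theta>\<^sup>2 / (4 * K) * (1 / measure lebesgue E) * complement_ratio \<Omega> E *
          \<phi> (1 * t * measure lebesgue E powr (\<bar>\<alpha>\<bar> / DIM('a))))
        \<le> (\<integral>\<^sup>+ y\<in>\<Omega> - E. ennreal (\<phi> (t * norm (x - y) powr (- \<alpha>)) / norm (x - y) ^ (2 * DIM('a))) \<partial>lebesgue)"
    if "t > 0" "x \<in> \<Omega>" "E \<in> sets lebesgue" "E \<subseteq> \<Omega>" "0 < emeasure lebesgue E" "emeasure lebesgue E < \<infinity>"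
    for t x E
    using young_kernel_integral_ge[OF \<open>young_function \<phi>\<close> _ K growth _ _ reg[OF \<open>x \<in> \<Omega>\<close>] \<Omega>] \<open>\<alpha> < 0\<close> \<theta> that
    by simp
  moreover have "\<theta>\<^sup>2 / (4 * K) > 0" using \<theta> K by simp
  ultimately show ?thesis unfolding complement_ratio_def using zero_less_one by blast
qed

end
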